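(* Let $0<q<1$ and let $r,f,g,v,w,u,x$ be complex parameters with $\max\{|xs|,|xu|\}<1$. Then, with the operators acting on the variable $s$, $$\mathbb{T}(r,f,g,v,w,uD_s)\left\{\frac{1}{(xs;q)_\infty}\right\}=\frac{1}{(xs;q)_\infty}\;{}_3\Phi_2\left[\begin{matrix}r,f,g;\\ v,w;\end{matrix}\;q;\,xu\right]$$ and $$\mathbb{E}(r,f,g,v,w,-u\theta_s)\left\{(xs;q)_\infty\right\}=(xs;q)_\infty\;{}_3\Phi_3\left[\begin{matrix}r,f,g;\\ v,w,0;\end{matrix}\;q;\,xu\right].$$
   Context: Throughout $0<q<1$. For complex $\alpha$: $(\alpha;q)_0=1$, $(\alpha;q)_n=\prod_{k=0}^{n-1}(1-\alpha q^k)$, $(\alpha;q)_\infty=\prod_{k=0}^\infty(1-\alpha q^k)$, and $(\alpha_1,\dots,\alpha_m;q)_n=(\alpha_1;q)_n\cdots(\alpha_m;q)_n$. The basic hypergeometric series is ${}_{\mathfrak r}\Phi_{\mathfrak s}\left[\begin{matrix}a_1,\dots,a_{\mathfrak r};\\ b_1,\dots,b_{\mathfrak s};\end{matrix}\,q;z\right]=\sum_{n=0}^\infty\big[(-1)^nq^{\binom n2}\big]^{1+\mathfrak s-\mathfrak r}\frac{(a_1,\dots,a_{\mathfrak r};q)_n}{(b_1,\dots,b_{\mathfrak s};q)_n}\frac{z^n}{(q;q)_n}$. The $q$-difference operators acting on functions of $s$ are $D_s\{F(s)\}=\frac{F(s)-F(qs)}{s}$ and $\theta_s\{F(s)\}=\frac{F(q^{-1}s)-F(s)}{q^{-1}s}$,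 with $D_s^0,\theta_s^0$ the identity. For a parameter $y$, $\mathbb{T}(r,f,g,v,w,yD_s)=\sum_{n=0}^\infty\frac{(r,f,g;q)_n}{(q,v,w;q)_n}(yD_s)^n$ and $\mathbb{E}(r,f,g,v,w,y\theta_s)=\sum_{n=0}^\infty\frac{(-1)^nq^{\binom n2}(r,f,g;q)_n}{(q,v,w;q)_n}(y\theta_s)^n$ (here $y=u$ resp. $y=-u$), applied termwise. *)

theory Defs
  imports "HOL-Analysis.Analysis"
begin

definition qpoch :: "complex \<Rightarrow> complex \<Rightarrow> nat \<Rightarrow> complex" where
  "qpoch a q n = (\<Prod>k<n. 1 - a * q ^ k)"

definition qpoch_inf :: "complex \<Rightarrow> complex \<Rightarrow> complex" where
  "qpoch_inf a q = (\<Prod>k. 1 - a * q ^ k)"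

definition basic_hyp :: "complex list \<Rightarrow> complex list \<Rightarrow> complex \<Rightarrow> complex \<Rightarrow> complex" where
  "basic_hyp as bs q z =
     (\<Sum>n. ((-1) ^ n * q ^ (n choose 2)) powi (1 + int (length bs) - int (length as))
          * (\<Prod>a\<leftarrow>as. qpoch a q n) / (\<Prod>b\<leftarrow>bs. qpoch b q n)
          * z ^ n / qpoch q q n)"

definition qD :: "complex \<Rightarrow> (complex \<Rightarrow> complex) \<Rightarrow> complex \<Rightarrow> complex" where
  "qD q F s = (F s - F (q * s)) / s"

definition qtheta :: "complex \<Rightarrow> (complex \<Rightarrow> complex) \<Rightarrow> complex \<Rightarrow> complex" where
  "qtheta q F s = (F (s / q) - F s) / (s / q)"

definition opT :: "complex \<Rightarrow> complex \<Rightarrow> complex \<Rightarrow> complex \<Rightarrow> complex \<Rightarrow> complex \<Rightarrow> complex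
    \<Rightarrow> (complex \<Rightarrow> complex) \<Rightarrow> complex \<Rightarrow> complex" where
  "opT q r f g v w y F s =
     (\<Sum>n. qpoch r q n * qpoch f q n * qpoch g q n / (qpoch q q n * qpoch v q n * qpoch w q n)
          * (y ^ n * (qD q ^^ n) F s))"

definition opE :: "complex \<Rightarrow> complex \<Rightarrow> complex \<Rightarrow> complex \<Rightarrow> complex \<Rightarrow> complex \<Rightarrow> complex
    \<Rightarrow> (complex \<Rightarrow> complex) \<Rightarrow> complex \<Rightarrow> complex" where
  "opE q r f g v w y F s =
     (\<Sum>n. (-1) ^ n * q ^ (n choose 2) * qpoch r q n * qpoch f q n * qpoch g q n
            / (qpoch q q n * qpoch v q n * qpoch w q n)
          * (y ^ n * (qtheta q ^^ n) F s))"

end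

theory Submission
  imports Defs
begin

text \<open>Since \<open>(xt;q)\<^sub>\<infinity> = (1 - xt) (xqt;q)\<^sub>\<infinity>\<close>, the function \<open>1/(xt;q)\<^sub>\<infinity>\<close> is an eigenfunction of
  \<open>D\<^sub>t\<close> with eigenvalue \<open>x\<close>, and \<open>(xt;q)\<^sub>\<infinity>\<close> is an eigenfunction of \<open>\<theta>\<^sub>t\<close> with eigenvalue \<open>-x\<close>.
  Hence every power \<open>(uD\<^sub>s)\<^sup>n\<close> resp. \<open>(-u\<theta>\<^sub>s)\<^sup>n\<close> just multiplies the function by \<open>(xu)\<^sup>n\<close>, and
  the operator series collapses to the function times the basic hypergeometric series in
  \<open>xu\<close>; for \<open>|xu| < 1\<close> that series converges absolutely by the ratio test, so the
  constant factor may be pulled out of the sum.\<close>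

lemma prod_list_map_mult:
  fixes f g :: "'a \<Rightarrow> 'b::comm_monoid_mult"
  shows "(\<Prod>x\<leftarrow>xs. f x * g x) = (\<Prod>x\<leftarrow>xs. f x) * (\<Prod>x\<leftarrow>xs. g x)"
  by (induction xs) (simp_all add: mult_ac)

lemma tendsto_prod_list:
  fixes f :: "'a \<Rightarrow> 'b \<Rightarrow> 'c::real_normed_algebra_1"
  assumes "\<And>a. a \<in> set as \<Longrightarrow> ((\<lambda>n. f a n) \<longlongrightarrow> l a) F"
  shows "((\<lambda>n. \<Prod>a\<leftarrow>as. f a n) \<longlongrightarrow> (\<Prod>a\<leftarrow>as. l a)) F"
  using assms by (induction as) (auto intro!: tendsto_mult)

lemma summable_norm_ratio_tendsto:
  fixes T R :: "nat \<Rightarrow> 'a::real_normed_div_algebra"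
  assumes ratio: "\<And>n. T (Suc n) = R n * T n"
    and lim: "R \<longlonglongrightarrow> L" and "norm L < 1"
  shows "summable (\<lambda>n. norm (T n))"
proof -
  define m where "m = (norm L + 1) / 2"
  have "norm L < m" "m < 1" using \<open>norm L < 1\<close> by (auto simp: m_def)
  have "(\<lambda>n. norm (R n)) \<longlonglongrightarrow> norm L"
    using lim by (rule tendsto_norm)
  then have "eventually (\<lambda>n. norm (R n) < m) sequentially"
    using \<open>norm L < m\<close> by (rule order_tendstoD)
  then obtain N where N: "\<And>n. n \<ge> N \<Longrightarrow> norm (R n) < m"
    by (auto simp: eventually_sequentially)
  show ?thesis
  proof (rule summable_ratio_test[OF \<open>m < 1\<close>])
    fix n assume "n \<ge> N"
    then have "norm (R n) * norm (T n) \<le> m * norm (T n)"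
      using N by (intro mult_right_mono) (auto intro: less_imp_le)
    then show "norm (norm (T (Suc n))) \<le> m * norm (norm (T n))"
      by (simp add: ratio norm_mult)
  qed
qed

lemma qpoch_Suc: "qpoch a c (Suc n) = qpoch a c n * (1 - a * c ^ n)"
  by (simp add: qpoch_def)

lemma qpoch_zero_left [simp]: "qpoch 0 c n = 1"
  by (simp add: qpoch_def)

lemma convergent_prod_qpoch:
  fixes a q :: complex
  assumes "norm q < 1"
  shows "convergent_prod (\<lambda>k. 1 - a * q ^ k)"
proof -
  have "summable (\<lambda>k. norm a * norm q ^ k)"
    using assms by (intro summable_mult summable_geometric) simp
  then have "summable (\<lambda>k. norm ((1 - a * q ^ k) - 1))"
    by (simp add: norm_mult norm_power)
  then show ?thesis
    by (intro abs_convergent_prod_imp_convergent_prod summable_imp_abs_convergent_prod)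
qed

lemma qpoch_inf_unfold:
  fixes a q :: complex
  assumes "norm q < 1"
  shows "qpoch_inf a q = (1 - a) * qpoch_inf (a * q) q"
proof -
  have "(\<lambda>k. 1 - a * q ^ k) has_prod ((\<Prod>k<1. 1 - a * q ^ k) * (\<Prod>k. 1 - a * q ^ (k + 1)))"
    by (rule has_prod_ignore_initial_segment'[OF convergent_prod_qpoch[OF assms]])
  then have "qpoch_inf a q = (\<Prod>k<1. 1 - a * q ^ k) * (\<Prod>k. 1 - a * q ^ (k + 1))"
    unfolding qpoch_inf_def by (rule has_prod_unique[symmetric])
  then show ?thesis
    unfolding qpoch_inf_def by (simp add: mult_ac)
qed

lemma summable_norm_qpoch_quotient_series:
  fixes as bs :: "complex list" and c z :: complex
  assumes "norm c < 1" and "norm z < 1"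
  shows "summable (\<lambda>n. norm ((\<Prod>a\<leftarrow>as. qpoch a c n) / (\<Prod>b\<leftarrow>bs. qpoch b c n) * z ^ n))"
proof (rule summable_norm_ratio_tendsto)
  fix n
  show "(\<Prod>a\<leftarrow>as. qpoch a c (Suc n)) / (\<Prod>b\<leftarrow>bs. qpoch b c (Suc n)) * z ^ Suc n
      = (\<Prod>a\<leftarrow>as. 1 - a * c ^ n) / (\<Prod>b\<leftarrow>bs. 1 - b * c ^ n) * z
        * ((\<Prod>a\<leftarrow>as. qpoch a c n) / (\<Prod>b\<leftarrow>bs. qpoch b c n) * z ^ n)"
    by (simp add: qpoch_Suc prod_list_map_mult mult_ac)
next
  have "(\<lambda>n. 1 - a * c ^ n) \<longlonglongrightarrow> 1 - a * 0" for a
    by (intro tendsto_intros LIMSEQ_power_zero assms(1))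
  then have "(\<lambda>n. \<Prod>a\<leftarrow>xs. 1 - a * c ^ n) \<longlonglongrightarrow> (\<Prod>a\<leftarrow>xs. 1)" for xs
    by (intro tendsto_prod_list) simp
  then have "(\<lambda>n. \<Prod>a\<leftarrow>xs. 1 - a * c ^ n) \<longlonglongrightarrow> 1" for xs
    by (simp add: map_replicate_const)
  then show "(\<lambda>n. (\<Prod>a\<leftarrow>as. 1 - a * c ^ n) / (\<Prod>b\<leftarrow>bs. 1 - b * c ^ n) * z) \<longlonglongrightarrow> 1 / 1 * z"
    by (intro tendsto_intros) simp_all
next
  show "norm (1 / 1 * z) < 1"
    using assms(2) by simp
qed

lemma qD_funpow_eigen:
  assumes "\<And>t. t \<in> S \<Longrightarrow> c * t \<in> S"
    and "\<And>t. t \<in> S \<Longrightarrow> qD c F t = x * F t"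
    and "t \<in> S"
  shows "(qD c ^^ n) F t = x ^ n * F t"
  using assms(3)
proof (induction n arbitrary: t)
  case (Suc n)
  have "(qD c ^^ Suc n) F t = ((qD c ^^ n) F t - (qD c ^^ n) F (c * t)) / t"
    by (simp only: funpow.simps o_apply qD_def)
  also have "\<dots> = (x ^ n * F t - x ^ n * F (c * t)) / t"
    using Suc.IH[OF Suc.prems] Suc.IH[OF assms(1)[OF Suc.prems]] by simp
  also have "\<dots> = x ^ n * qD c F t"
    by (simp add: qD_def right_diff_distrib)
  finally show ?case
    using Suc.prems assms(2) by simp
qed simp

lemma qtheta_funpow_eigen:
  assumes "\<And>t. t \<in> S \<Longrightarrow> t / c \<in> S"
    and "\<And>t. t \<in> S \<Longrightarrow> qtheta c F t = x * F t"
    and "t \<in> S"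
  shows "(qtheta c ^^ n) F t = x ^ n * F t"
  using assms(3)
proof (induction n arbitrary: t)
  case (Suc n)
  have "(qtheta c ^^ Suc n) F t = ((qtheta c ^^ n) F (t / c) - (qtheta c ^^ n) F t) / (t / c)"
    by (simp only: funpow.simps o_apply qtheta_def)
  also have "\<dots> = (x ^ n * F (t / c) - x ^ n * F t) / (t / c)"
    using Suc.IH[OF Suc.prems] Suc.IH[OF assms(1)[OF Suc.prems]] by simp
  also have "\<dots> = x ^ n * qtheta c F t"
    by (simp add: qtheta_def right_diff_distrib)
  finally show ?case
    using Suc.prems assms(2) by simp
qed simp

lemma qD_inverse_qpoch_inf:
  assumes "norm c < 1" and "t \<noteq> 0" and "x * t \<noteq> 1"
  shows "qD c (\<lambda>t. 1 / qpoch_inf (x * t) c) t = x * (1 / qpoch_inf (x * t) c)"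
proof -
  let ?P = "\<lambda>t. qpoch_inf (x * t) c"
  have unfold: "?P t = (1 - x * t) * ?P (c * t)"
    using qpoch_inf_unfold[OF assms(1), of "x * t"] by (simp add: mult_ac)
  have "1 / ?P t - 1 / ?P (c * t) = x * t / ?P t"
  proof (cases "?P (c * t) = 0")
    \<comment> \<open>if \<open>?P (c * t) = 0\<close> then also \<open>?P t = 0\<close>, and both sides are \<open>0\<close> since \<open>1 / 0 = 0\<close>\<close>
    case False
    moreover have "1 - x * t \<noteq> 0"
      using assms(3) by simp
    ultimately have "?P t \<noteq> 0"
      using unfold by simp
    moreover have "1 / ?P (c * t) = (1 - x * t) / ?P t"
      using unfold False \<open>1 - x * t \<noteq> 0\<close> by simp
    ultimately show ?thesis
      by (simp add: field_simps)
  qed (simp add: unfold)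
  then show ?thesis
    using assms(2) by (simp add: qD_def)
qed

lemma qtheta_qpoch_inf:
  assumes "norm c < 1" and "c \<noteq> 0" and "t \<noteq> 0"
  shows "qtheta c (\<lambda>t. qpoch_inf (x * t) c) t = - x * qpoch_inf (x * t) c"
proof -
  have "qpoch_inf (x * (t / c)) c = (1 - x * t / c) * qpoch_inf (x * t) c"
    using qpoch_inf_unfold[OF assms(1), of "x * t / c"] assms(2) by simp
  then show ?thesis
    using assms(2,3) by (simp add: qtheta_def field_simps)
qed

lemma opT_qD_eigenfunction:
  assumes "norm c < 1" and "norm (x * y) < 1"
    and eigen: "\<And>n. (qD c ^^ n) F s = x ^ n * F s"
  shows "opT c r f g v w y F s = F s * basic_hyp [r, f, g] [v, w] c (x * y)"
proof -
  define a where "a n = qpoch r c n * qpoch f c n * qpoch g c n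
      / (qpoch c c n * qpoch v c n * qpoch w c n) * (x * y) ^ n" for n
  have "summable (\<lambda>n. norm (a n))"
    using summable_norm_qpoch_quotient_series[OF assms(1,2), of "[r, f, g]" "[c, v, w]"]
    by (simp add: a_def mult_ac)
  then have "summable a"
    by (rule summable_norm_cancel)
  have "opT c r f g v w y F s = (\<Sum>n. a n * F s)"
    unfolding opT_def a_def eigen by (simp add: power_mult_distrib mult_ac)
  also have "\<dots> = (\<Sum>n. a n) * F s"
    using \<open>summable a\<close> by (rule suminf_mult2[symmetric])
  also have "(\<Sum>n. a n) = basic_hyp [r, f, g] [v, w] c (x * y)"
    unfolding basic_hyp_def a_def by (simp add: mult_ac)
  finally show ?thesis
    by (simp add: mult_ac)
qed

lemma opE_qtheta_eigenfunction:
  assumes "norm c < 1" and "norm (x * y) < 1"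
    and eigen: "\<And>n. (qtheta c ^^ n) F s = x ^ n * F s"
  shows "opE c r f g v w y F s = F s * basic_hyp [r, f, g] [v, w, 0] c (x * y)"
proof -
  define b where "b n = qpoch r c n * qpoch f c n * qpoch g c n
      / (qpoch c c n * qpoch v c n * qpoch w c n) * (x * y) ^ n" for n
  define a where "a n = (-1) ^ n * c ^ (n choose 2) * b n" for n
  have "summable (\<lambda>n. norm (b n))"
    using summable_norm_qpoch_quotient_series[OF assms(1,2), of "[r, f, g]" "[c, v, w]"]
    by (simp add: b_def mult_ac)
  then have "summable a"
  proof (rule summable_comparison_test')
    fix n
    have "norm (a n) = norm c ^ (n choose 2) * norm (b n)"
      by (simp add: a_def norm_mult norm_power)
    also have "\<dots> \<le> norm (b n)"
      using assms(1) by (simp add: mult_left_le_one_le power_le_one)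
    finally show "norm (a n) \<le> norm (b n)" .
  qed
  have "opE c r f g v w y F s = (\<Sum>n. a n * F s)"
    unfolding opE_def a_def b_def eigen by (simp add: power_mult_distrib mult_ac)
  also have "\<dots> = (\<Sum>n. a n) * F s"
    using \<open>summable a\<close> by (rule suminf_mult2[symmetric])
  also have "(\<Sum>n. a n) = basic_hyp [r, f, g] [v, w, 0] c (x * y)"
    unfolding basic_hyp_def a_def b_def by (simp add: mult_ac)
  finally show ?thesis
    by (simp add: mult_ac)
qed

theorem corollary1:
  fixes q :: real and r f g v w u x s :: complex
  assumes "0 < q" and "q < 1"
    and "s \<noteq> 0"
    and "max (norm (x * s)) (norm (x * u)) < 1"
  shows "opT (of_real q) r f g v w u (\<lambda>t. 1 / qpoch_inf (x * t) (of_real q)) s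
           = 1 / qpoch_inf (x * s) (of_real q) * basic_hyp [r, f, g] [v, w] (of_real q) (x * u)
    \<and> opE (of_real q) r f g v w (- u) (\<lambda>t. qpoch_inf (x * t) (of_real q)) s
           = qpoch_inf (x * s) (of_real q) * basic_hyp [r, f, g] [v, w, 0] (of_real q) (x * u)"
proof -
  let ?c = "complex_of_real q"
  let ?S = "{t. t \<noteq> 0 \<and> norm (x * t) < 1}"
  have c: "norm ?c < 1" "?c \<noteq> 0"
    using assms(1,2) by auto
  have "?c * t \<in> ?S" if "t \<in> ?S" for t
  proof -
    have "norm (x * (?c * t)) = q * norm (x * t)"
      using assms(1) by (simp add: norm_mult)
    also have "\<dots> \<le> norm (x * t)"
      using assms(1,2) by (simp add: mult_left_le_one_le)
    also have "\<dots> < 1"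
      using that by simp
    finally show ?thesis
      using that assms(1) by simp
  qed
  then have "(qD ?c ^^ n) (\<lambda>t. 1 / qpoch_inf (x * t) ?c) s = x ^ n * (1 / qpoch_inf (x * s) ?c)" for n
    using assms(3,4) by (intro qD_funpow_eigen[where S = ?S] qD_inverse_qpoch_inf[OF c(1)]) auto
  moreover have "(qtheta ?c ^^ n) (\<lambda>t. qpoch_inf (x * t) ?c) s = (- x) ^ n * qpoch_inf (x * s) ?c" for n
    using assms(3) c by (intro qtheta_funpow_eigen[where S = "- {0}"] qtheta_qpoch_inf) auto
  ultimately show ?thesis
    using assms(4) opT_qD_eigenfunction[OF c(1)] opE_qtheta_eigenfunction[OF c(1), of "- x" "- u"]
    by auto
qed

end
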